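(* The weighted transverse map $\tau:\mathfrak{V}_n\to\mathfrak{W}_n$ satisfies: (i) for all $A\in\mathrm{GL}(n,\mathbb{Z})$ and $V\in\mathfrak{V}_n$, $\tau(A\cdot V)=A^*\cdot\tau(V)$, where $A^*=(A^{-1})^T$; (ii) for all $\sigma\in\mathfrak{S}_{n+1}$ and $V\in\mathfrak{V}_n$, $\tau(\sigma(V))=\tau(V)\ast\sigma$.
   Context: For $V=(\mathbf{v}_0,\ldots,\mathbf{v}_n)\in\mathrm{Mat}(n,n+1;\mathbb{Z})$ (columns indexed $0,\ldots,n$), $V_j$ is the determinant of $V$ with column $\mathbf{v}_j$ deleted and $V^0=(\mathbf{v}_1,\ldots,\mathbf{v}_n)$. $\mathfrak{V}_n$ is the set of F-admissible matrices: all $V_j\ne0$, $\gcd(V_0,\ldots,V_n)=1$, $\sum_j|V_j|\mathbf{v}_j=0$. $\tau(V)=((V^0)^{-1})^T\cdot\mathrm{lcm}(|V_0|,\ldots,|V_n|)\,\mathrm{diag}(1/|V_1|,\ldots,1/|V_n|)$, and $\mathfrak{W}_n=\tau(\mathfrak{V}_n)$. The permutation group $\mathfrak{S}_{n+1}$ of $\{0,\ldots,n\}$ acts on $\mathfrak{V}_n$ by $\sigma(V)=(\mathbf{v}_{\sigma(0)},\ldots,\mathbf{v}_{\sigma(n)})$ (right multiplication by the permutation matrix), and on $\mathfrak{W}_n$ by: for $W=(\mathbf{w}_1,\ldots,\mathbf{w}_n)$ and $\mathbf{w}_0:=\mathbf{0}$, $W\ast\sigma=(\mathbf{w}_{\sigma(1)}-\mathbf{w}_{\sigma(0)},\ldots,\mathbf{w}_{\sigma(n)}-\mathbf{w}_{\sigma(0)})$.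 *)

theory Defs
  imports "Jordan_Normal_Form.Determinant" "Jordan_Normal_Form.Gauss_Jordan_Elimination"
begin

(* Matrices are Jordan_Normal_Form matrices; columns of an n x (n+1) matrix are
   indexed 0..n (JNF indices 0..n), columns of an n x n matrix W=(w_1..w_n) are
   stored at JNF indices 0..n-1 (w_k = col W (k-1)). *)

definition del_col :: "'a mat \<Rightarrow> nat \<Rightarrow> 'a mat" where
  "del_col V j = mat (dim_row V) (dim_col V - 1)
     (\<lambda>(i,k). V $$ (i, if k < j then k else Suc k))"

definition Vminor :: "int mat \<Rightarrow> nat \<Rightarrow> int" where
  "Vminor V j = det (del_col V j)"

definition Vzero :: "int mat \<Rightarrow> int mat" where
  "Vzero V = del_col V 0"

definition F_admissible :: "nat \<Rightarrow> int mat set" where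
  "F_admissible n = {V. V \<in> carrier_mat n (n+1)
      \<and> (\<forall>j\<le>n. Vminor V j \<noteq> 0)
      \<and> Gcd {Vminor V j | j. j \<le> n} = 1
      \<and> finsum_vec TYPE(int) n (\<lambda>j. \<bar>Vminor V j\<bar> \<cdot>\<^sub>v col V j) {0..n} = 0\<^sub>v n}"

definition mat_inv :: "rat mat \<Rightarrow> rat mat" where
  "mat_inv M = the (mat_inverse M)"

definition tau :: "int mat \<Rightarrow> rat mat" where
  "tau V = (let n = dim_row V;
               L = Lcm {\<bar>Vminor V j\<bar> | j. j \<le> n}
           in transpose_mat (mat_inv (map_mat rat_of_int (Vzero V)))
              * mat_diag n (\<lambda>i. rat_of_int L / rat_of_int \<bar>Vminor V (Suc i)\<bar>))"

definition GLZ :: "nat \<Rightarrow> int mat set" where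
  "GLZ n = {A. A \<in> carrier_mat n n \<and> invertible_mat A}"

definition dual_mat :: "int mat \<Rightarrow> rat mat" where
  "dual_mat A = transpose_mat (mat_inv (map_mat rat_of_int A))"

definition perm_cols :: "'a mat \<Rightarrow> (nat \<Rightarrow> nat) \<Rightarrow> 'a mat" where
  "perm_cols V \<sigma> = mat (dim_row V) (dim_col V) (\<lambda>(i,k). V $$ (i, \<sigma> k))"

definition wcol :: "rat mat \<Rightarrow> nat \<Rightarrow> rat vec" where
  "wcol W k = (if k = 0 then 0\<^sub>v (dim_row W) else col W (k - 1))"

definition W_act :: "rat mat \<Rightarrow> (nat \<Rightarrow> nat) \<Rightarrow> rat mat" where
  "W_act W \<sigma> = mat (dim_row W) (dim_col W)
     (\<lambda>(i,k). (wcol W (\<sigma> (Suc k)) - wcol W (\<sigma> 0)) $ i)"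

end

theory Submission
  imports Defs
begin

text \<open>Since \<open>tau V = (V\<^sup>0)\<^sup>-\<^sup>T D\<close> with \<open>D\<close> the diagonal of weights \<open>lcm / \<bar>V\<^sub>i\<bar>\<close>, the matrix
  \<open>tau V\<close> is the unique \<open>W\<close> with \<open>W\<^sup>T V\<^sup>0 = D\<close>, and both parts are proved by checking
  this for the right-hand side. Multiplying \<open>V\<close> by \<open>A \<in> GL(n,\<int>)\<close> multiplies every minor
  by \<open>det A = \<plusminus>1\<close>, so \<open>D\<close> is unchanged and \<open>(A\<^sup>* W)\<^sup>T (A V\<^sup>0) = W\<^sup>T V\<^sup>0\<close>. Permuting
  columns permutes the minors up to sign, and with \<open>w\<^sub>0 = 0\<close> the relation
  \<open>\<Sum> \<bar>V\<^sub>j\<bar> v\<^sub>j = 0\<close> extends the duality to \<open>w\<^sub>a \<bullet> v\<^sub>b = (\<delta>\<^sub>a\<^sub>b - \<delta>\<^sub>0\<^sub>b) lcm / \<bar>V\<^sub>b\<bar>\<close>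
  for all \<open>a, b \<le> n\<close>; pairing the differences \<open>w\<^sub>a - w\<^sub>c\<close> against the permuted columns
  then gives exactly the weights of the permuted matrix.\<close>

lemma dim_del_col [simp]:
  "dim_row (del_col V j) = dim_row V" "dim_col (del_col V j) = dim_col V - 1"
  unfolding del_col_def by auto

lemma col_del_col: "k < dim_col V - 1 \<Longrightarrow> col (del_col V j) k = col V (insert_index j k)"
  unfolding del_col_def by (auto simp: insert_index_def)

lemma del_col_carrier [simp]: "V \<in> carrier_mat n (Suc k) \<Longrightarrow> del_col V j \<in> carrier_mat n k"
  unfolding carrier_mat_def by simp

lemma del_col_mult:
  assumes "A \<in> carrier_mat m n" and "V \<in> carrier_mat n k"
  shows "del_col (A * V) j = A * del_col V j"
  by (rule mat_col_eqI) (use assms in \<open>auto simp: col_del_col insert_index_def\<close>)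

lemma mat_inv_inverts:
  assumes M: "M \<in> carrier_mat n n" and "det M \<noteq> 0"
  shows "mat_inv M \<in> carrier_mat n n" "M * mat_inv M = 1\<^sub>m n" "mat_inv M * M = 1\<^sub>m n"
proof -
  have "M \<in> Units (ring_mat TYPE(rat) n ())"
    using det_non_zero_imp_unit[OF M \<open>det M \<noteq> 0\<close>] .
  then obtain B where "mat_inverse M = Some B"
    using mat_inverse(1)[OF M] by fastforce
  from mat_inverse(2)[OF M this]
  show "mat_inv M \<in> carrier_mat n n" "M * mat_inv M = 1\<^sub>m n" "mat_inv M * M = 1\<^sub>m n"
    unfolding mat_inv_def using \<open>mat_inverse M = Some B\<close> by auto
qed

lemma eq_mult_mat_inv_iff:
  assumes M: "M \<in> carrier_mat n n" and "det M \<noteq> 0"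
    and X: "X \<in> carrier_mat m n" and Y: "Y \<in> carrier_mat m n"
  shows "X = Y * mat_inv M \<longleftrightarrow> X * M = Y"
proof
  note inv = mat_inv_inverts[OF assms(1,2)]
  show "X * M = Y" if "X = Y * mat_inv M"
    using that inv Y M by (simp add: assoc_mult_mat[OF Y inv(1) M])
  show "X = Y * mat_inv M" if "X * M = Y"
  proof -
    have "Y * mat_inv M = X * (M * mat_inv M)"
      using that assoc_mult_mat[OF X M inv(1)] by simp
    then show ?thesis using inv(2) X by simp
  qed
qed

definition minor_lcm :: "int mat \<Rightarrow> int" where
  "minor_lcm V = Lcm {\<bar>Vminor V j\<bar> | j. j \<le> dim_row V}"

definition minor_weight :: "int mat \<Rightarrow> nat \<Rightarrow> rat" where
  "minor_weight V j = rat_of_int (minor_lcm V) / rat_of_int \<bar>Vminor V j\<bar>"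

lemma tau_eq_mult:
  "tau V = transpose_mat (mat_inv (map_mat rat_of_int (Vzero V)))
             * mat_diag (dim_row V) (\<lambda>i. minor_weight V (Suc i))"
  unfolding tau_def minor_weight_def minor_lcm_def Let_def ..

lemma transpose_mat_diag [simp]: "transpose_mat (mat_diag n f) = mat_diag n f"
  unfolding mat_diag_def by auto

lemma det_Vzero: "det (map_mat rat_of_int (Vzero V)) = rat_of_int (Vminor V 0)"
  unfolding Vminor_def Vzero_def by simp

lemma tau_carrier:
  assumes V: "V \<in> carrier_mat n (Suc n)" and "Vminor V 0 \<noteq> 0"
  shows "tau V \<in> carrier_mat n n"
proof -
  have "mat_inv (map_mat rat_of_int (Vzero V)) \<in> carrier_mat n n"
    by (rule mat_inv_inverts(1)) (use assms in \<open>simp_all add: Vminor_def Vzero_def\<close>)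
  then show ?thesis
    using V unfolding tau_eq_mult by simp
qed

lemma tau_eq_iff_mult:
  assumes V: "V \<in> carrier_mat n (Suc n)" and V0: "Vminor V 0 \<noteq> 0"
    and X: "X \<in> carrier_mat n n"
  shows "tau V = X \<longleftrightarrow>
           transpose_mat X * map_mat rat_of_int (Vzero V) = mat_diag n (\<lambda>i. minor_weight V (Suc i))"
proof -
  define M where "M = map_mat rat_of_int (Vzero V)"
  define D where "D = mat_diag n (\<lambda>i. minor_weight V (Suc i))"
  have M: "M \<in> carrier_mat n n"
    using V unfolding M_def Vzero_def by auto
  have detM: "det M \<noteq> 0"
    using V0 unfolding M_def det_Vzero by simp
  have D: "D \<in> carrier_mat n n" unfolding D_def by simp
  have "transpose_mat (tau V) = D * mat_inv M"
    using V mat_inv_inverts(1)[OF M detM]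
    by (simp add: tau_eq_mult transpose_mult[of _ n n _ n] M_def D_def)
  then have "tau V = X \<longleftrightarrow> transpose_mat X = D * mat_inv M"
    by (metis transpose_mat_eq)
  also have "\<dots> \<longleftrightarrow> transpose_mat X * M = D"
    using eq_mult_mat_inv_iff[OF M detM _ D] X by simp
  finally show ?thesis unfolding M_def D_def .
qed

lemma tau_eq_iff:
  assumes V: "V \<in> carrier_mat n (Suc n)" and V0: "Vminor V 0 \<noteq> 0"
    and X: "X \<in> carrier_mat n n"
  shows "tau V = X \<longleftrightarrow> (\<forall>k<n. \<forall>i<n. col X k \<bullet> col (map_mat rat_of_int V) (Suc i)
                                        = (if k = i then minor_weight V (Suc i) else 0))"
proof -
  have "col (map_mat rat_of_int (Vzero V)) i = col (map_mat rat_of_int V) (Suc i)" if "i < n" for i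
    using that V unfolding Vzero_def by (simp add: col_del_col insert_index_def)
  then show ?thesis
    using X V unfolding tau_eq_iff_mult[OF assms]
    by (auto simp: mat_eq_iff mat_diag_def Vzero_def)
qed

lemma Vminor_mult:
  assumes "A \<in> carrier_mat n n" and "V \<in> carrier_mat n (Suc n)"
  shows "Vminor (A * V) j = det A * Vminor V j"
  unfolding Vminor_def del_col_mult[OF assms]
  by (rule det_mult) (use assms in auto)

lemma abs_det_GLZ:
  assumes "A \<in> GLZ n"
  shows "\<bar>det A\<bar> = 1"
proof -
  obtain B where A: "A \<in> carrier_mat n n" and AB: "A * B = 1\<^sub>m n" and BA: "B * A = 1\<^sub>m (dim_row B)"
    using assms unfolding GLZ_def invertible_mat_def inverts_mat_def by auto
  have B: "B \<in> carrier_mat n n"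
    using A AB BA by (metis carrier_matD carrier_matI index_mult_mat(2,3) index_one_mat(2,3))
  have "det A * det B = 1"
    using det_mult[OF A B] AB by simp
  then show ?thesis
    using zmult_eq_1_iff by auto
qed

lemma minor_weight_mult_GLZ:
  assumes "A \<in> GLZ n" and "V \<in> carrier_mat n (Suc n)"
  shows "minor_weight (A * V) = minor_weight V"
proof -
  have A: "A \<in> carrier_mat n n" using assms(1) unfolding GLZ_def by auto
  have "\<bar>Vminor (A * V) j\<bar> = \<bar>Vminor V j\<bar>" for j
    using Vminor_mult[OF A assms(2)] abs_det_GLZ[OF assms(1)] by (simp add: abs_mult)
  moreover have "dim_row (A * V) = dim_row V" using A assms(2) by simp
  ultimately show ?thesis
    unfolding minor_weight_def minor_lcm_def by simp
qed

lemma tau_mult_GLZ: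
  assumes "A \<in> GLZ n" and V: "V \<in> carrier_mat n (Suc n)" and V0: "Vminor V 0 \<noteq> 0"
  shows "tau (A * V) = dual_mat A * tau V"
proof -
  define A' where "A' = map_mat rat_of_int A"
  define M where "M = map_mat rat_of_int (Vzero V)"
  define T where "T = tau V"
  have A: "A \<in> carrier_mat n n" using assms(1) unfolding GLZ_def by auto
  have A': "A' \<in> carrier_mat n n" and detA': "det A' \<noteq> 0"
    using A abs_det_GLZ[OF assms(1)] unfolding A'_def by auto
  note inv = mat_inv_inverts[OF A' detA']
  have M: "M \<in> carrier_mat n n" using V unfolding M_def Vzero_def by simp
  have T: "T \<in> carrier_mat n n" using tau_carrier[OF V V0] unfolding T_def .
  have AV: "A * V \<in> carrier_mat n (Suc n)" using A V by simp
  have AV0: "Vminor (A * V) 0 \<noteq> 0"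
    using Vminor_mult[OF A V] abs_det_GLZ[OF assms(1)] V0 by auto
  have M_AV: "map_mat rat_of_int (Vzero (A * V)) = A' * M"
    unfolding Vzero_def del_col_mult[OF A V] A'_def M_def
    by (rule of_int_hom.mat_hom_mult[OF A del_col_carrier[OF V]])
  have "mat_inv A' * (A' * M) = M"
    using assoc_mult_mat[OF inv(1) A' M] inv(3) M by simp
  then have "transpose_mat (dual_mat A * T) * (A' * M) = transpose_mat T * M"
    using inv A' M T unfolding dual_mat_def A'_def[symmetric]
    by (simp add: transpose_mult[of _ n n _ n] assoc_mult_mat[of "transpose_mat T" n n _ n "A' * M" n])
  also have "\<dots> = mat_diag n (\<lambda>i. minor_weight V (Suc i))"
    using tau_eq_iff_mult[OF V V0 T] unfolding T_def M_def by simp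
  moreover have "dual_mat A * T \<in> carrier_mat n n"
    using inv(1) T unfolding dual_mat_def A'_def[symmetric] by simp
  ultimately show ?thesis
    using tau_eq_iff_mult[OF AV AV0] M_AV minor_weight_mult_GLZ[OF assms(1) V]
    unfolding T_def by simp
qed

lemma del_col_perm_cols:
  assumes \<sigma>: "\<sigma> permutes {0..<Suc n}" and V: "V \<in> carrier_mat m (Suc n)" and j: "j \<le> n"
  shows "del_col (perm_cols V \<sigma>) j = perm_cols (del_col V (\<sigma> j)) (permutation_delete \<sigma> j)"
proof (rule eq_matI)
  fix r k assume "r < dim_row (perm_cols (del_col V (\<sigma> j)) (permutation_delete \<sigma> j))"
    and "k < dim_col (perm_cols (del_col V (\<sigma> j)) (permutation_delete \<sigma> j))"
  then have r: "r < m" and k: "k < n" using V by (auto simp: perm_cols_def)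
  have ins: "insert_index j k < Suc n" using j k by (simp add: insert_index_def)
  have "\<sigma> (insert_index j k) \<noteq> \<sigma> j"
    using permutes_inj[OF \<sigma>] by (metis injD insert_index_exclude)
  then have "insert_index (\<sigma> j) (permutation_delete \<sigma> j k) = \<sigma> (insert_index j k)"
    unfolding permutation_delete_def delete_ran_def delete_dom_def
    by (rule insert_delete_index)
  moreover have "permutation_delete \<sigma> j k < n"
    using permutes_in_image[OF permutation_delete_permutes[OF \<sigma>]] j k by simp
  ultimately show "del_col (perm_cols V \<sigma>) j $$ (r, k)
      = perm_cols (del_col V (\<sigma> j)) (permutation_delete \<sigma> j) $$ (r, k)"
    using V r k ins by (simp add: del_col_def perm_cols_def insert_index_def)
qed (use V in \<open>auto simp: perm_cols_def\<close>)

lemma det_perm_cols: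
  assumes C: "C \<in> carrier_mat n n" and \<rho>: "\<rho> permutes {0..<n}"
  shows "det (perm_cols C \<rho>) = signof \<rho> * det C"
proof -
  have P: "perm_cols C \<rho> \<in> carrier_mat n n"
    using C by (simp add: perm_cols_def)
  have "transpose_mat (perm_cols C \<rho>) = mat n n (\<lambda>(i, j). transpose_mat C $$ (\<rho> i, j))"
  proof (rule eq_matI)
    fix i j assume "i < dim_row (mat n n (\<lambda>(i, j). transpose_mat C $$ (\<rho> i, j)))"
      and "j < dim_col (mat n n (\<lambda>(i, j). transpose_mat C $$ (\<rho> i, j)))"
    moreover have "\<rho> i < n" if "i < n" using permutes_in_image[OF \<rho>] that by simp
    ultimately show "transpose_mat (perm_cols C \<rho>) $$ (i, j)
        = mat n n (\<lambda>(i, j). transpose_mat C $$ (\<rho> i, j)) $$ (i, j)"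
      using C by (simp add: perm_cols_def)
  qed (use C in \<open>simp_all add: perm_cols_def\<close>)
  then have "det (perm_cols C \<rho>) = det (mat n n (\<lambda>(i, j). transpose_mat C $$ (\<rho> i, j)))"
    using det_transpose[OF P] by simp
  also have "\<dots> = signof \<rho> * det (transpose_mat C)"
    using C by (intro det_permute_rows[OF _ \<rho>]) simp
  finally show ?thesis
    using det_transpose[OF C] by simp
qed

lemma abs_Vminor_perm_cols:
  assumes \<sigma>: "\<sigma> permutes {0..n}" and V: "V \<in> carrier_mat n (Suc n)" and j: "j \<le> n"
  shows "\<bar>Vminor (perm_cols V \<sigma>) j\<bar> = \<bar>Vminor V (\<sigma> j)\<bar>"
proof -
  have \<sigma>': "\<sigma> permutes {0..<Suc n}"
    using \<sigma> by (simp add: atLeastLessThanSuc_atLeastAtMost)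
  have \<rho>: "permutation_delete \<sigma> j permutes {0..<n}"
    using permutation_delete_permutes[OF \<sigma>'] j by simp
  have "Vminor (perm_cols V \<sigma>) j = signof (permutation_delete \<sigma> j) * Vminor V (\<sigma> j)"
    unfolding Vminor_def del_col_perm_cols[OF \<sigma>' V j]
    by (rule det_perm_cols[OF _ \<rho>]) (use V in simp)
  then show ?thesis
    by (simp add: abs_mult sign_def)
qed

lemma minor_lcm_perm_cols:
  assumes \<sigma>: "\<sigma> permutes {0..n}" and V: "V \<in> carrier_mat n (Suc n)"
  shows "minor_lcm (perm_cols V \<sigma>) = minor_lcm V"
proof -
  have minors: "{\<bar>Vminor U j\<bar> | j. j \<le> n} = (\<lambda>j. \<bar>Vminor U j\<bar>) ` {0..n}" for U
    by auto
  have "(\<lambda>j. \<bar>Vminor (perm_cols V \<sigma>) j\<bar>) ` {0..n} = (\<lambda>j. \<bar>Vminor V j\<bar>) ` \<sigma> ` {0..n}"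
    unfolding image_image using abs_Vminor_perm_cols[OF \<sigma> V] by (intro image_cong) auto
  then have "{\<bar>Vminor (perm_cols V \<sigma>) j\<bar> | j. j \<le> n} = {\<bar>Vminor V j\<bar> | j. j \<le> n}"
    unfolding minors permutes_image[OF \<sigma>] .
  then show ?thesis
    using V unfolding minor_lcm_def by (simp add: perm_cols_def)
qed

lemma minor_weight_perm_cols:
  assumes "\<sigma> permutes {0..n}" and "V \<in> carrier_mat n (Suc n)" and "j \<le> n"
  shows "minor_weight (perm_cols V \<sigma>) j = minor_weight V (\<sigma> j)"
  using abs_Vminor_perm_cols[OF assms] minor_lcm_perm_cols[OF assms(1,2)]
  unfolding minor_weight_def by simp

lemma F_admissible_weighted_pairing:
  assumes V: "V \<in> F_admissible n" and w: "w \<in> carrier_vec n"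
  shows "(\<Sum>j\<in>{0..n}. rat_of_int \<bar>Vminor V j\<bar> * (w \<bullet> col (map_mat rat_of_int V) j)) = 0"
proof -
  have Vc: "V \<in> carrier_mat n (Suc n)"
    and rel: "finsum_vec TYPE(int) n (\<lambda>j. \<bar>Vminor V j\<bar> \<cdot>\<^sub>v col V j) {0..n} = 0\<^sub>v n"
    using V unfolding F_admissible_def by auto
  have row: "(\<Sum>j\<in>{0..n}. \<bar>Vminor V j\<bar> * V $$ (r, j)) = 0" if r: "r < n" for r
  proof -
    have "finsum_vec TYPE(int) n (\<lambda>j. \<bar>Vminor V j\<bar> \<cdot>\<^sub>v col V j) {0..n} $ r
        = (\<Sum>j\<in>{0..n}. \<bar>Vminor V j\<bar> * V $$ (r, j))"
      using Vc r by (subst index_finsum_vec) auto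
    then show ?thesis using rel r by simp
  qed
  have "(\<Sum>j\<in>{0..n}. rat_of_int \<bar>Vminor V j\<bar> * (w \<bullet> col (map_mat rat_of_int V) j))
      = (\<Sum>j\<in>{0..n}. \<Sum>r<n. w $ r * rat_of_int (\<bar>Vminor V j\<bar> * V $$ (r, j)))"
    using Vc w by (intro sum.cong refl)
      (auto simp: scalar_prod_def sum_distrib_left lessThan_atLeast0 ac_simps)
  also have "\<dots> = (\<Sum>r<n. w $ r * rat_of_int (\<Sum>j\<in>{0..n}. \<bar>Vminor V j\<bar> * V $$ (r, j)))"
    by (subst sum.swap) (simp add: sum_distrib_left)
  also have "\<dots> = 0"
    using row by simp
  finally show ?thesis .
qed

lemma tau_col_pairing:
  assumes V: "V \<in> F_admissible n" and a: "a \<le> n" and b: "b \<le> n"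
  shows "wcol (tau V) a \<bullet> col (map_mat rat_of_int V) b
         = (if a = b then minor_weight V b else 0) - (if b = 0 then minor_weight V 0 else 0)"
proof -
  have Vc: "V \<in> carrier_mat n (Suc n)" and nz: "\<And>j. j \<le> n \<Longrightarrow> Vminor V j \<noteq> 0"
    using V unfolding F_admissible_def by auto
  have T: "tau V \<in> carrier_mat n n"
    using tau_carrier[OF Vc nz] by simp
  have w: "wcol (tau V) a \<in> carrier_vec n"
    using T unfolding wcol_def by auto
  have pairing: "col (tau V) k \<bullet> col (map_mat rat_of_int V) (Suc i)
                   = (if k = i then minor_weight V (Suc i) else 0)" if "k < n" "i < n" for k i
    using tau_eq_iff[OF Vc nz T] that by blast
  let ?p = "\<lambda>j. wcol (tau V) a \<bullet> col (map_mat rat_of_int V) j"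
  have pos: "?p j = (if j = a then minor_weight V j else 0)" if "a > 0" "j > 0" "j \<le> n" for j
  proof -
    have "wcol (tau V) a = col (tau V) (a - 1)" and "Suc (j - 1) = j" and "a - 1 = j - 1 \<longleftrightarrow> a = j"
      using that unfolding wcol_def by auto
    then show ?thesis
      using pairing[of "a - 1" "j - 1"] that a by simp
  qed
  consider "a = 0" | "a > 0" "b > 0" | "a > 0" "b = 0"
    by auto
  then show ?thesis
  proof cases
    case 1
    have "col (map_mat rat_of_int V) b \<in> carrier_vec n"
      using Vc by (intro carrier_vecI) simp
    then show ?thesis
      using 1 T unfolding wcol_def by simp
  next
    case 2
    then show ?thesis
      using pos b by simp
  next
    case 3
    have "(\<Sum>j\<in>{1..n}. rat_of_int \<bar>Vminor V j\<bar> * ?p j)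
        = (\<Sum>j\<in>{1..n}. if j = a then rat_of_int (minor_lcm V) else 0)"
      using pos nz 3 by (intro sum.cong refl) (auto simp: minor_weight_def)
    also have "\<dots> = rat_of_int (minor_lcm V)"
      using 3 a by simp
    finally have "rat_of_int \<bar>Vminor V 0\<bar> * ?p 0 + rat_of_int (minor_lcm V) = 0"
      using F_admissible_weighted_pairing[OF V w] by (simp add: sum.atLeast_Suc_atMost)
    then show ?thesis
      using 3 nz[of 0] unfolding minor_weight_def by (simp add: field_simps)
  qed
qed

lemma col_W_act:
  assumes "k < dim_col W"
  shows "col (W_act W \<sigma>) k = wcol W (\<sigma> (Suc k)) - wcol W (\<sigma> 0)"
  using assms unfolding W_act_def wcol_def by auto

lemma tau_perm_cols:
  assumes \<sigma>: "\<sigma> permutes {0..n}" and V: "V \<in> F_admissible n"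
  shows "tau (perm_cols V \<sigma>) = W_act (tau V) \<sigma>"
proof -
  have Vc: "V \<in> carrier_mat n (Suc n)" and nz: "\<And>j. j \<le> n \<Longrightarrow> Vminor V j \<noteq> 0"
    using V unfolding F_admissible_def by auto
  have \<sigma>_le: "\<sigma> j \<le> n" if "j \<le> n" for j
    using permutes_in_image[OF \<sigma>] that by simp
  have \<sigma>_eq: "\<sigma> i = \<sigma> j \<longleftrightarrow> i = j" for i j
    using permutes_inj[OF \<sigma>] by (auto dest: injD)
  have U: "perm_cols V \<sigma> \<in> carrier_mat n (Suc n)"
    using Vc by (simp add: perm_cols_def)
  have U0: "Vminor (perm_cols V \<sigma>) 0 \<noteq> 0"
    using abs_Vminor_perm_cols[OF \<sigma> Vc, of 0] nz[OF \<sigma>_le[of 0]] by auto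
  have T: "tau V \<in> carrier_mat n n"
    using tau_carrier[OF Vc nz] by simp
  have W: "W_act (tau V) \<sigma> \<in> carrier_mat n n"
    using T unfolding W_act_def by simp
  have wcol_carrier: "wcol (tau V) j \<in> carrier_vec n" for j
    using T unfolding wcol_def by auto
  have col_U: "col (map_mat rat_of_int (perm_cols V \<sigma>)) j = col (map_mat rat_of_int V) (\<sigma> j)"
    if "j \<le> n" for j
    using Vc that \<sigma>_le[OF that] by (auto simp: perm_cols_def)
  show ?thesis
    unfolding tau_eq_iff[OF U U0 W]
  proof (intro allI impI)
    fix k i assume k: "k < n" and i: "i < n"
    let ?c = "col (map_mat rat_of_int V) (\<sigma> (Suc i))"
    have "?c \<in> carrier_vec n"
      using Vc by (intro carrier_vecI) simp
    then have "col (W_act (tau V) \<sigma>) k \<bullet> col (map_mat rat_of_int (perm_cols V \<sigma>)) (Suc i)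
        = wcol (tau V) (\<sigma> (Suc k)) \<bullet> ?c - wcol (tau V) (\<sigma> 0) \<bullet> ?c"
      using k i T by (simp add: col_W_act col_U minus_scalar_prod_distrib[OF wcol_carrier wcol_carrier])
    also have "\<dots> = (if k = i then minor_weight (perm_cols V \<sigma>) (Suc i) else 0)"
      using k i by (simp add: tau_col_pairing[OF V] \<sigma>_le \<sigma>_eq minor_weight_perm_cols[OF \<sigma> Vc])
    finally show "col (W_act (tau V) \<sigma>) k \<bullet> col (map_mat rat_of_int (perm_cols V \<sigma>)) (Suc i)
        = (if k = i then minor_weight (perm_cols V \<sigma>) (Suc i) else 0)" .
  qed
qed

theorem mainTheorem15:
  fixes n :: nat
  shows "(\<forall>A \<in> GLZ n. \<forall>V \<in> F_admissible n. tau (A * V) = dual_mat A * tau V)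
       \<and> (\<forall>\<sigma>. \<sigma> permutes {0..n} \<longrightarrow>
            (\<forall>V \<in> F_admissible n. tau (perm_cols V \<sigma>) = W_act (tau V) \<sigma>))"
  using tau_mult_GLZ tau_perm_cols unfolding F_admissible_def by auto

end
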